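(* Let $(\mathcal{A},e)$ be an order-unit space and $L$ a closed Lip-norm on $\mathcal{A}$. Let $\mathcal{K}=\{\tilde a\in\mathcal{A}/\mathbb{R}e: \tilde L(\tilde a)\le1\}$ and let $Af_0(\mathcal{K})$ be the Banach space of $\|\cdot\|^{\sim}$-continuous affine real functions on $\mathcal{K}$ vanishing at $0$, with the supremum norm. Each $\lambda\in\mathcal{A}'^0=\{\lambda\in\mathcal{A}':\lambda(e)=0\}$ defines a function $\tilde a\mapsto\lambda(a)$ on $\mathcal{K}$ belonging to $Af_0(\mathcal{K})$; the set of functions so obtained is dense in $Af_0(\mathcal{K})$ for the supremum norm.
   Context: An order-unit space is a real partially ordered vector space $\mathcal{A}$ with distinguished $e$ such that (i) for each $a$ there is $r$ with $a\le re$, and (ii) if $a\le re$ for all $r>0$ then $a\le0$; norm $\|a\|=\inf\{r\ge0:-re\le a\le re\}$ (not necessarily complete), with Banach dual $\mathcal{A}'$. $\|\tilde a\|^{\sim}=\inf_t\|a+te\|$ is the quotient norm on $\mathcal{A}/\mathbb{R}e$, and $\tilde L(\tilde a)=L(a)$. A Lip-norm is a finite-valued seminorm $L$ on $\mathcal{A}$ with: (1) $L(a)=0$ iff $a\in\mathbb{R}e$; (2) $\{a:L(a)\le1\}$ is norm-closed; (3) the image of $\{a:L(a)\le1\}$ in $\mathcal{A}/\mathbb{R}e$ is totally bounded for $\|\cdot\|^{\sim}$. $L$ is closed if $\{a:L(a)\le1\}$ is complete for the norm metric. *)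

theory Defs
  imports "HOL-Analysis.Analysis"
begin

(* The order-unit space is a type 'a of class ordered_real_vector (a real vector
   space with a partial order compatible with + and nonnegative scalar multiples);
   the distinguished element e is an order unit (Archimedean). *)
definition order_unit :: "'a::ordered_real_vector \<Rightarrow> bool" where
  "order_unit e \<longleftrightarrow>
     (\<forall>a. \<exists>r::real. a \<le> r *\<^sub>R e) \<and>
     (\<forall>a. (\<forall>r::real. r > 0 \<longrightarrow> a \<le> r *\<^sub>R e) \<longrightarrow> a \<le> 0)"

definition ou_norm :: "'a::ordered_real_vector \<Rightarrow> 'a \<Rightarrow> real" where
  "ou_norm e a = Inf {r. 0 \<le> r \<and> - (r *\<^sub>R e) \<le> a \<and> a \<le> r *\<^sub>R e}"

definition q_norm :: "'a::ordered_real_vector \<Rightarrow> 'a \<Rightarrow> real" where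
  "q_norm e a = Inf {ou_norm e (a + t *\<^sub>R e) | t. True}"

definition dual_space :: "'a::ordered_real_vector \<Rightarrow> ('a \<Rightarrow> real) set" where
  "dual_space e = {l. linear l \<and> (\<exists>C. \<forall>a. \<bar>l a\<bar> \<le> C * ou_norm e a)}"

definition is_seminorm :: "('a::real_vector \<Rightarrow> real) \<Rightarrow> bool" where
  "is_seminorm L \<longleftrightarrow> (\<forall>a b. L (a + b) \<le> L a + L b) \<and> (\<forall>r a. L (r *\<^sub>R a) = \<bar>r\<bar> * L a)"

definition lip_norm :: "'a::ordered_real_vector \<Rightarrow> ('a \<Rightarrow> real) \<Rightarrow> bool" where
  "lip_norm e L \<longleftrightarrow>
     is_seminorm L \<and>
     (\<forall>a. L a = 0 \<longleftrightarrow> (\<exists>t. a = t *\<^sub>R e)) \<and>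
     (\<forall>x a. (\<forall>n. L (x n) \<le> 1) \<and> ((\<lambda>n. ou_norm e (x n - a)) \<longlonglongrightarrow> 0) \<longrightarrow> L a \<le> 1) \<and>
     (\<forall>\<epsilon>>0. \<exists>F. finite F \<and> F \<subseteq> {a. L a \<le> 1} \<and>
        (\<forall>a. L a \<le> 1 \<longrightarrow> (\<exists>b\<in>F. q_norm e (a - b) < \<epsilon>)))"

definition closed_lip_norm :: "'a::ordered_real_vector \<Rightarrow> ('a \<Rightarrow> real) \<Rightarrow> bool" where
  "closed_lip_norm e L \<longleftrightarrow> lip_norm e L \<and>
     (\<forall>x. (\<forall>n. L (x n) \<le> 1) \<and>
          (\<forall>\<epsilon>>0. \<exists>N. \<forall>m\<ge>N. \<forall>n\<ge>N. ou_norm e (x m - x n) < \<epsilon>)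
        \<longrightarrow> (\<exists>a. L a \<le> 1 \<and> (\<lambda>n. ou_norm e (x n - a)) \<longlonglongrightarrow> 0))"

definition coset :: "'a::ordered_real_vector \<Rightarrow> 'a \<Rightarrow> 'a set" where
  "coset e a = {a + t *\<^sub>R e | t. True}"

definition lipK :: "'a::ordered_real_vector \<Rightarrow> ('a \<Rightarrow> real) \<Rightarrow> 'a set set" where
  "lipK e L = coset e ` {a. L a \<le> 1}"

(* Af_0(K): continuous (for the quotient norm) affine real functions on K vanishing at 0.
   Operations on A / R e are computed on representatives. *)
definition Af0 :: "'a::ordered_real_vector \<Rightarrow> ('a \<Rightarrow> real) \<Rightarrow> ('a set \<Rightarrow> real) set" where
  "Af0 e L = {f.
     (\<forall>a b s. L a \<le> 1 \<and> L b \<le> 1 \<and> 0 \<le> s \<and> s \<le> 1 \<longrightarrow>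
        f (coset e (s *\<^sub>R a + (1 - s) *\<^sub>R b)) = s * f (coset e a) + (1 - s) * f (coset e b)) \<and>
     (\<forall>a. L a \<le> 1 \<longrightarrow> (\<forall>\<epsilon>>0. \<exists>\<delta>>0. \<forall>b. L b \<le> 1 \<and> q_norm e (b - a) < \<delta>
        \<longrightarrow> \<bar>f (coset e b) - f (coset e a)\<bar> < \<epsilon>)) \<and>
     f (coset e 0) = 0}"

definition dual_fun :: "('a \<Rightarrow> real) \<Rightarrow> 'a set \<Rightarrow> real" where
  "dual_fun l X = l (SOME a. a \<in> X)"

end

(* An f in Af0(K) is odd on the symmetric convex set K; total boundedness of K makes it
   bounded, and continuity at 0 then gives |f a| <= eps + M q(a) on K, q the quotient norm.
   A Hahn-Banach sandwich between the sublinear functional M q and the convex function f + eps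
   on K produces a linear l with l <= M q and l <= f + eps on K: such an l is bounded, kills e,
   and, f being odd, lies within eps of f on K.  If e is not positive, the order-unit norm is
   degenerate and the axioms of a closed Lip-norm force A = R e, where all is trivial. *)

theory Submission
  imports Defs
begin

lemma cINF_le_add_cINF:
  fixes f g h :: "'i \<Rightarrow> real"
  assumes "I \<noteq> {}" "J \<noteq> {}" "bdd_below (h ` K)"
    and "\<And>i j. i \<in> I \<Longrightarrow> j \<in> J \<Longrightarrow> \<exists>k\<in>K. h k \<le> f i + g j"
  shows "(INF k\<in>K. h k) \<le> (INF i\<in>I. f i) + (INF j\<in>J. g j)"
proof -
  have "(INF k\<in>K. h k) - g j \<le> (INF i\<in>I. f i)" if "j \<in> J" for j
  proof (rule cINF_greatest[OF assms(1)])
    fix i assume "i \<in> I"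
    with assms(4) that obtain k where "k \<in> K" "h k \<le> f i + g j" by blast
    with cINF_lower[OF assms(3)] show "(INF k\<in>K. h k) - g j \<le> f i" by fastforce
  qed
  then have "(INF k\<in>K. h k) - (INF i\<in>I. f i) \<le> (INF j\<in>J. g j)"
    by (intro cINF_greatest[OF assms(2)]) (simp add: algebra_simps)
  then show ?thesis by simp
qed

lemma cINF_eq_mult_cINF:
  fixes f h :: "'i \<Rightarrow> real"
  assumes "c > 0" "I \<noteq> {}" "bdd_below (f ` I)" "bdd_below (h ` K)"
    and "\<And>i. i \<in> I \<Longrightarrow> \<exists>k\<in>K. h k \<le> c * f i"
    and "\<And>k. k \<in> K \<Longrightarrow> \<exists>i\<in>I. c * f i \<le> h k"
  shows "(INF k\<in>K. h k) = c * (INF i\<in>I. f i)"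
proof (rule antisym)
  have "(INF k\<in>K. h k) / c \<le> f i" if i: "i \<in> I" for i
  proof -
    obtain k where "k \<in> K" "h k \<le> c * f i" using assms(5)[OF i] by blast
    with cINF_lower[OF assms(4)] have "(INF k\<in>K. h k) \<le> c * f i" by fastforce
    with assms(1) show ?thesis by (simp add: field_simps)
  qed
  then have "(INF k\<in>K. h k) / c \<le> (INF i\<in>I. f i)" by (rule cINF_greatest[OF assms(2)])
  with assms(1) show "(INF k\<in>K. h k) \<le> c * (INF i\<in>I. f i)" by (simp add: field_simps)
next
  have "K \<noteq> {}" using assms(2,5) by blast
  then show "c * (INF i\<in>I. f i) \<le> (INF k\<in>K. h k)"
  proof (rule cINF_greatest)
    fix k assume "k \<in> K"
    then obtain i where "i \<in> I" "c * f i \<le> h k" using assms(6) by blast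
    with cINF_lower[OF assms(3)] assms(1) show "c * (INF i\<in>I. f i) \<le> h k"
      by (meson mult_left_mono order_trans less_imp_le)
  qed
qed

lemma finite_if_witnesses_in_finite:
  assumes "finite F" and witness: "\<And>s. s \<in> S \<Longrightarrow> \<exists>b\<in>F. R s b"
    and unique: "\<And>s s' b. s \<in> S \<Longrightarrow> s' \<in> S \<Longrightarrow> R s b \<Longrightarrow> R s' b \<Longrightarrow> s = s'"
  shows "finite S"
proof -
  obtain g where g: "\<And>s. s \<in> S \<Longrightarrow> g s \<in> F \<and> R s (g s)"
    using bchoice[of S "\<lambda>s b. b \<in> F \<and> R s b"] witness by blast
  have "inj_on g S"
  proof (rule inj_onI)
    fix s s' assume "s \<in> S" "s' \<in> S" "g s = g s'"
    with g have "R s (g s)" "R s' (g s)" by metis+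
    with \<open>s \<in> S\<close> \<open>s' \<in> S\<close> show "s = s'" by (rule unique)
  qed
  moreover have "g ` S \<subseteq> F" using g by blast
  then have "finite (g ` S)" using \<open>finite F\<close> by (rule finite_subset)
  ultimately show ?thesis using finite_imageD by blast
qed

section \<open>Sublinear functionals and the Hahn--Banach theorem\<close>

definition sublinear :: "('a::real_vector \<Rightarrow> real) \<Rightarrow> bool" where
  "sublinear q \<longleftrightarrow> (\<forall>x y. q (x + y) \<le> q x + q y) \<and> (\<forall>c x. c > 0 \<longrightarrow> q (c *\<^sub>R x) = c * q x)"

lemma sublinear_add_le: "sublinear q \<Longrightarrow> q (x + y) \<le> q x + q y"
  unfolding sublinear_def by blast

lemma sublinear_scaleR_pos: "sublinear q \<Longrightarrow> c > 0 \<Longrightarrow> q (c *\<^sub>R x) = c * q x"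
  unfolding sublinear_def by blast

lemma sublinear_zero: "sublinear q \<Longrightarrow> q 0 = 0"
  using sublinear_scaleR_pos[of q 2 0] by simp

lemma sublinear_scaleR: "sublinear q \<Longrightarrow> c \<ge> 0 \<Longrightarrow> q (c *\<^sub>R x) = c * q x"
  using sublinear_zero[of q] sublinear_scaleR_pos[of q c x] by (cases "c = 0") auto

lemma sublinear_minus_le: "sublinear q \<Longrightarrow> - q (- x) \<le> q x"
  using sublinear_add_le[of q x "- x"] sublinear_zero[of q] by simp

lemma sublinear_diff_le: "sublinear q \<Longrightarrow> q x - q y \<le> q (x - y)"
  using sublinear_add_le[of q "x - y" y] by simp

lemma sublinear_cmult: "sublinear q \<Longrightarrow> M \<ge> 0 \<Longrightarrow> sublinear (\<lambda>x. M * q x)"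
  unfolding sublinear_def by (simp add: mult_left_mono flip: distrib_left)

lemma sublinear_ray_minorant:
  fixes q :: "'a::real_vector \<Rightarrow> real"
  assumes q: "sublinear q"
  obtains r where "sublinear r" "\<And>x. r x \<le> q x" "\<And>x. r x \<le> q (x + a) - q a"
proof -
  define T where "T = {t::real. t \<ge> 0}"
  define r where "r x = (INF t\<in>T. q (x + t *\<^sub>R a) - t * q a)" for x
  have T: "T \<noteq> {}" "0 \<in> T" "1 \<in> T" unfolding T_def by auto
  have "- q (- x) \<le> q (x + t *\<^sub>R a) - t * q a" if "t \<in> T" for x t
    using sublinear_add_le[OF q, of "x + t *\<^sub>R a" "- x"] sublinear_scaleR[OF q, of t a] that
    by (simp add: T_def)
  then have bdd: "bdd_below ((\<lambda>t. q (x + t *\<^sub>R a) - t * q a) ` T)" for x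
    by (meson bdd_belowI2)
  have "sublinear r"
    unfolding sublinear_def
  proof safe
    fix x y
    show "r (x + y) \<le> r x + r y" unfolding r_def
    proof (rule cINF_le_add_cINF[OF T(1) T(1) bdd])
      fix i j assume "i \<in> T" "j \<in> T"
      then show "\<exists>k\<in>T. q (x + y + k *\<^sub>R a) - k * q a \<le>
          (q (x + i *\<^sub>R a) - i * q a) + (q (y + j *\<^sub>R a) - j * q a)"
        using sublinear_add_le[OF q, of "x + i *\<^sub>R a" "y + j *\<^sub>R a"]
        by (intro bexI[of _ "i + j"]) (auto simp: T_def algebra_simps)
    qed
  next
    fix c :: real and x assume c: "c > 0"
    show "r (c *\<^sub>R x) = c * r x" unfolding r_def
    proof (rule cINF_eq_mult_cINF[OF c T(1) bdd bdd])
      fix i assume "i \<in> T"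
      then show "\<exists>k\<in>T. q (c *\<^sub>R x + k *\<^sub>R a) - k * q a \<le> c * (q (x + i *\<^sub>R a) - i * q a)"
        using c sublinear_scaleR_pos[OF q c, of "x + i *\<^sub>R a"]
        by (intro bexI[of _ "c * i"]) (auto simp: T_def algebra_simps)
    next
      fix k assume "k \<in> T"
      then show "\<exists>i\<in>T. c * (q (x + i *\<^sub>R a) - i * q a) \<le> q (c *\<^sub>R x + k *\<^sub>R a) - k * q a"
        using c sublinear_scaleR_pos[OF q c, of "x + (k / c) *\<^sub>R a"]
        by (intro bexI[of _ "k / c"]) (auto simp: T_def algebra_simps)
    qed
  qed
  moreover have "r x \<le> q x" "r x \<le> q (x + a) - q a" for x
    using cINF_lower[OF bdd T(2), of x] cINF_lower[OF bdd T(3), of x] unfolding r_def by simp_all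
  ultimately show ?thesis by (rule that)
qed

lemma minimal_sublinear_imp_linear:
  fixes q :: "'a::real_vector \<Rightarrow> real"
  assumes q: "sublinear q"
    and minimal: "\<And>r. sublinear r \<Longrightarrow> (\<And>x. r x \<le> q x) \<Longrightarrow> r = q"
  shows "linear q"
proof -
  have "q x + q a \<le> q (x + a)" for x a
  proof -
    obtain r where r: "sublinear r" "\<And>x. r x \<le> q x" and ray: "\<And>x. r x \<le> q (x + a) - q a"
      using sublinear_ray_minorant[OF q] by blast
    from r have "r = q" by (rule minimal)
    with ray[of x] show ?thesis by simp
  qed
  with sublinear_add_le[OF q] have add: "q (x + y) = q x + q y" for x y
    by (meson antisym)
  have minus: "q (- x) = - q x" for x
    using add[of x "- x"] sublinear_zero[OF q] by simp
  show ?thesis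
  proof (rule linearI)
    fix c :: real and x
    show "q (c *\<^sub>R x) = c *\<^sub>R q x"
    proof (cases "c \<ge> 0")
      case False
      then show ?thesis using sublinear_scaleR[OF q, of "- c" x] minus[of "(- c) *\<^sub>R x"] by simp
    qed (simp add: sublinear_scaleR[OF q])
  qed (rule add)
qed

lemma sublinear_chain_lower_bound:
  fixes C :: "('a::real_vector \<Rightarrow> real) set"
  assumes "C \<noteq> {}" and sublinear: "\<And>q. q \<in> C \<Longrightarrow> sublinear q" and below: "\<And>q. q \<in> C \<Longrightarrow> q \<le> p"
    and chain: "\<And>q q'. q \<in> C \<Longrightarrow> q' \<in> C \<Longrightarrow> q \<le> q' \<or> q' \<le> q"
  shows "\<exists>r. sublinear r \<and> r \<le> p \<and> (\<forall>q\<in>C. r \<le> q)"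
proof -
  define r where "r x = (INF q\<in>C. q x)" for x
  have "- p (- x) \<le> q x" if "q \<in> C" for q x
  proof -
    have "q (- x) \<le> p (- x)" using below[OF that] by (simp add: le_fun_def)
    with sublinear_minus_le[OF sublinear[OF that], of x] show ?thesis by linarith
  qed
  then have bdd: "bdd_below ((\<lambda>q. q x) ` C)" for x
    by (meson bdd_belowI2)
  have "sublinear r"
    unfolding sublinear_def r_def
  proof safe
    fix x y
    show "(INF q\<in>C. q (x + y)) \<le> (INF q\<in>C. q x) + (INF q\<in>C. q y)"
    proof (rule cINF_le_add_cINF[OF assms(1) assms(1) bdd])
      fix q q' assume q: "q \<in> C" "q' \<in> C"
      show "\<exists>k\<in>C. k (x + y) \<le> q x + q' y"
      proof (cases "q \<le> q'")
        case True
        then show ?thesis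
          using q sublinear_add_le[OF sublinear, of q x y] unfolding le_fun_def
          by (metis add_left_mono order_trans)
      next
        case False
        then have "q' \<le> q" using chain[OF q] by blast
        then show ?thesis
          using q sublinear_add_le[OF sublinear, of q' x y] unfolding le_fun_def
          by (metis add_right_mono order_trans)
      qed
    qed
  next
    fix c :: real and x assume "c > 0"
    then show "(INF q\<in>C. q (c *\<^sub>R x)) = c * (INF q\<in>C. q x)"
      by (intro cINF_eq_mult_cINF[OF _ assms(1) bdd bdd]) (auto simp: sublinear_scaleR_pos sublinear)
  qed
  moreover have "r \<le> q" if "q \<in> C" for q
    using cINF_lower[OF bdd that] unfolding r_def le_fun_def by simp
  moreover obtain q where "q \<in> C" using assms(1) by blast
  ultimately show ?thesis using below by (meson order_trans)
qed

text \<open>Hahn--Banach in its dominated form, via Zorn's lemma: a minimal sublinear functional below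
  \<open>p\<close> exists and is linear.\<close>

lemma linear_le_sublinear_exists:
  fixes p :: "'a::real_vector \<Rightarrow> real"
  assumes "sublinear p"
  shows "\<exists>l. linear l \<and> l \<le> p"
proof -
  define A where "A = {q. sublinear q \<and> q \<le> p}"
  have "partial_order_on A (relation_of (\<lambda>q q'. q' \<le> q) A)"
    unfolding partial_order_on_def preorder_on_def refl_on_def relation_of_def
    by (auto simp: trans_def antisym_def intro: order_trans antisym)
  moreover have "\<exists>u\<in>A. \<forall>q\<in>C. u \<le> q" if C: "C \<in> Chains (relation_of (\<lambda>q q'. q' \<le> q) A)" for C
  proof (cases "C = {}")
    case True
    with assms show ?thesis unfolding A_def by auto
  next
    case False
    have "C \<subseteq> A" using Chains_relation_of[OF C] .
    moreover have "q \<le> q' \<or> q' \<le> q" if "q \<in> C" "q' \<in> C" for q q'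
      using C that unfolding Chains_def relation_of_def by blast
    ultimately show ?thesis
      using sublinear_chain_lower_bound[OF False, of p] unfolding A_def by auto
  qed
  ultimately obtain m where m: "m \<in> A" and minimal: "\<And>q. q \<in> A \<Longrightarrow> q \<le> m \<Longrightarrow> q = m"
    using predicate_Zorn[of A "\<lambda>q q'. q' \<le> q"] by blast
  have "linear m"
  proof (rule minimal_sublinear_imp_linear)
    show "sublinear m" using m unfolding A_def by blast
  next
    fix r assume "sublinear r" "\<And>x. r x \<le> m x"
    with m show "r = m" by (intro minimal) (auto simp: A_def le_fun_def intro: order_trans)
  qed
  with m show ?thesis unfolding A_def by blast
qed

lemma convex_on_conic_combination:
  assumes h: "convex_on B h" and "k1 \<in> B" "k2 \<in> B" "0 \<le> t1" "0 \<le> t2"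
  obtains k where "k \<in> B" "(t1 + t2) *\<^sub>R k = t1 *\<^sub>R k1 + t2 *\<^sub>R k2"
    "(t1 + t2) * h k \<le> t1 * h k1 + t2 * h k2"
proof (cases "t1 + t2 = 0")
  case True
  then have "t1 = 0" "t2 = 0" using assms(4,5) by auto
  with assms(2) that[of k1] show ?thesis by simp
next
  case False
  define t where "t = t1 + t2"
  have t: "t > 0" "t1 / t + t2 / t = 1" "0 \<le> t1 / t" "0 \<le> t2 / t"
    using False assms(4,5) unfolding t_def by (auto simp flip: add_divide_distrib)
  define k where "k = (t1 / t) *\<^sub>R k1 + (t2 / t) *\<^sub>R k2"
  have "k \<in> B" "h k \<le> (t1 / t) * h k1 + (t2 / t) * h k2"
    using h assms(2,3) t(2-4) unfolding k_def convex_on_def by (blast intro: convexD)+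
  moreover from this(2) have "t * h k \<le> t1 * h k1 + t2 * h k2"
    using t(1) by (simp add: field_simps)
  moreover have "t *\<^sub>R k = t1 *\<^sub>R k1 + t2 *\<^sub>R k2"
    using t(1) unfolding k_def by (simp add: scaleR_add_right)
  ultimately show ?thesis using that unfolding t_def by blast
qed

text \<open>Take \<open>p x = inf {t h k + q (x - t k) | t \<ge> 0, k \<in> B}\<close>: \<open>t = 0\<close> gives \<open>p \<le> q\<close>, and
  \<open>(t, k) = (1, k)\<close> gives \<open>p \<le> h\<close> on \<open>B\<close>.\<close>

lemma sublinear_between_exists:
  fixes q h :: "'a::real_vector \<Rightarrow> real"
  assumes q: "sublinear q" and h: "convex_on B h" and "B \<noteq> {}"
    and h_ge: "\<And>k. k \<in> B \<Longrightarrow> - q (- k) \<le> h k"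
  obtains p where "sublinear p" "\<And>x. p x \<le> q x" "\<And>k. k \<in> B \<Longrightarrow> p k \<le> h k"
proof -
  define I where "I = {(t :: real, k). 0 \<le> t \<and> k \<in> B}"
  define \<phi> where "\<phi> x = (\<lambda>(t, k). t * h k + q (x - t *\<^sub>R k))" for x
  define p where "p x = (INF i\<in>I. \<phi> x i)" for x
  obtain k0 where "k0 \<in> B" using \<open>B \<noteq> {}\<close> by blast
  then have I: "I \<noteq> {}" "(0, k0) \<in> I" "\<And>k. k \<in> B \<Longrightarrow> (1, k) \<in> I" unfolding I_def by auto
  have "- q (- x) \<le> \<phi> x i" if "i \<in> I" for x i
  proof -
    obtain t k where i: "i = (t, k)" "0 \<le> t" "k \<in> B" using \<open>i \<in> I\<close> unfolding I_def by blast
    have "- q (- (t *\<^sub>R k)) \<le> t * h k"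
      using mult_left_mono[OF h_ge[OF \<open>k \<in> B\<close>] \<open>0 \<le> t\<close>] sublinear_scaleR[OF q \<open>0 \<le> t\<close>, of "- k"]
      by simp
    moreover have "q (- (t *\<^sub>R k)) - q (- x) \<le> q (x - t *\<^sub>R k)"
      using sublinear_diff_le[OF q, of "- (t *\<^sub>R k)" "- x"] by simp
    ultimately show ?thesis unfolding i \<phi>_def by simp
  qed
  then have bdd: "bdd_below (\<phi> x ` I)" for x
    by (meson bdd_belowI2)
  have p_le: "p x \<le> \<phi> x i" if "i \<in> I" for x i
    unfolding p_def using cINF_lower[OF bdd that] .
  have "\<exists>k\<in>I. \<phi> (x + y) k \<le> \<phi> x i + \<phi> y j" if ij: "i \<in> I" "j \<in> I" for x y i j
  proof -
    obtain t1 k1 t2 k2 where ij: "i = (t1, k1)" "j = (t2, k2)" "0 \<le> t1" "0 \<le> t2" "k1 \<in> B" "k2 \<in> B"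
      using ij unfolding I_def by blast
    then obtain k where "k \<in> B" and k: "(t1 + t2) *\<^sub>R k = t1 *\<^sub>R k1 + t2 *\<^sub>R k2"
      "(t1 + t2) * h k \<le> t1 * h k1 + t2 * h k2"
      using convex_on_conic_combination[OF h] by metis
    have "q (x + y - (t1 + t2) *\<^sub>R k) \<le> q (x - t1 *\<^sub>R k1) + q (y - t2 *\<^sub>R k2)"
      using sublinear_add_le[OF q, of "x - t1 *\<^sub>R k1" "y - t2 *\<^sub>R k2"] unfolding k(1)
      by (simp add: algebra_simps)
    with k(2) have "\<phi> (x + y) (t1 + t2, k) \<le> \<phi> x i + \<phi> y j"
      unfolding \<phi>_def ij by simp
    moreover have "(t1 + t2, k) \<in> I" using ij \<open>k \<in> B\<close> unfolding I_def by simp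
    ultimately show ?thesis by blast
  qed
  moreover have "\<exists>k\<in>I. \<phi> (c *\<^sub>R x) k \<le> c * \<phi> x i" "\<exists>j\<in>I. c * \<phi> x j \<le> \<phi> (c *\<^sub>R x) i"
    if "c > 0" "i \<in> I" for c x i
  proof -
    obtain t k where i: "i = (t, k)" "0 \<le> t" "k \<in> B" using \<open>i \<in> I\<close> unfolding I_def by blast
    have "\<phi> (c *\<^sub>R x) (c * t, k) = c * \<phi> x i" "c * \<phi> x (t / c, k) = \<phi> (c *\<^sub>R x) i"
      using sublinear_scaleR_pos[OF q \<open>c > 0\<close>, of "x - t *\<^sub>R k"]
        sublinear_scaleR_pos[OF q \<open>c > 0\<close>, of "x - (t / c) *\<^sub>R k"] \<open>c > 0\<close>
      by (simp_all add: \<phi>_def i algebra_simps)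
    moreover have "(c * t, k) \<in> I" "(t / c, k) \<in> I" using i \<open>c > 0\<close> unfolding I_def by auto
    ultimately show "\<exists>k\<in>I. \<phi> (c *\<^sub>R x) k \<le> c * \<phi> x i" "\<exists>j\<in>I. c * \<phi> x j \<le> \<phi> (c *\<^sub>R x) i"
      by (metis order_refl)+
  qed
  ultimately have "sublinear p"
    unfolding sublinear_def p_def
    by (auto intro!: cINF_le_add_cINF[OF I(1) I(1) bdd] cINF_eq_mult_cINF[OF _ I(1) bdd bdd])
  moreover have "p x \<le> q x" for x
    using p_le[OF I(2), of x] by (simp add: \<phi>_def)
  moreover have "p k \<le> h k" if "k \<in> B" for k
    using p_le[OF I(3)[OF that], of k] sublinear_zero[OF q] by (simp add: \<phi>_def)
  ultimately show ?thesis by (rule that)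
qed

lemma linear_le_sublinear_and_convex_exists:
  fixes q h :: "'a::real_vector \<Rightarrow> real"
  assumes "sublinear q" "convex_on B h" "B \<noteq> {}" "\<And>k. k \<in> B \<Longrightarrow> - q (- k) \<le> h k"
  shows "\<exists>l. linear l \<and> l \<le> q \<and> (\<forall>k\<in>B. l k \<le> h k)"
proof -
  obtain p where "sublinear p" "\<And>x. p x \<le> q x" "\<And>k. k \<in> B \<Longrightarrow> p k \<le> h k"
    using sublinear_between_exists[OF assms] by blast
  moreover obtain l where "linear l" "l \<le> p" using linear_le_sublinear_exists[OF \<open>sublinear p\<close>] by blast
  ultimately show ?thesis unfolding le_fun_def by (meson order_trans)
qed

section \<open>Lip-norms and the space \<open>Af0\<close>\<close>

lemma is_seminorm_imp_sublinear: "is_seminorm L \<Longrightarrow> sublinear L"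
  unfolding is_seminorm_def sublinear_def by simp

lemma is_seminorm_zero: "is_seminorm L \<Longrightarrow> L 0 = 0"
  using sublinear_zero[OF is_seminorm_imp_sublinear] .

lemma is_seminorm_uminus: "is_seminorm L \<Longrightarrow> L (- a) = L a"
  unfolding is_seminorm_def by (metis abs_minus_cancel abs_one mult_1 scaleR_minus1_left)

lemma is_seminorm_nonneg: "is_seminorm L \<Longrightarrow> 0 \<le> L a"
  using sublinear_minus_le[OF is_seminorm_imp_sublinear] is_seminorm_uminus by fastforce

lemma is_seminorm_scaled_into_ball: "is_seminorm L \<Longrightarrow> L ((1 / (L a + 1)) *\<^sub>R a) \<le> 1"
  using is_seminorm_nonneg[of L a] unfolding is_seminorm_def by simp

lemma convex_seminorm_ball: "is_seminorm L \<Longrightarrow> convex {a. L a \<le> 1}"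
proof (rule convexI)
  fix a b and u v :: real
  assume L: "is_seminorm L" and "a \<in> {a. L a \<le> 1}" "b \<in> {a. L a \<le> 1}" "0 \<le> u" "0 \<le> v" "u + v = 1"
  then have "u * L a + v * L b \<le> 1"
    by (metis mem_Collect_eq add_mono mult_left_mono mult.right_neutral)
  moreover have "L (u *\<^sub>R a + v *\<^sub>R b) \<le> u * L a + v * L b"
    using L \<open>0 \<le> u\<close> \<open>0 \<le> v\<close> unfolding is_seminorm_def by (metis abs_of_nonneg)
  ultimately show "u *\<^sub>R a + v *\<^sub>R b \<in> {a. L a \<le> 1}" by simp
qed

lemma dual_fun_coset:
  assumes "linear l" "l e = 0"
  shows "dual_fun l (coset e a) = l a"
proof -
  have "a \<in> coset e a" unfolding coset_def by (auto intro: exI[of _ 0])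
  then obtain t where "(SOME b. b \<in> coset e a) = a + t *\<^sub>R e"
    using someI[of "\<lambda>b. b \<in> coset e a"] unfolding coset_def by blast
  with assms show ?thesis unfolding dual_fun_def by (simp add: linear_add linear_scale)
qed

lemma coset_scaleR_unit: "coset e (t *\<^sub>R e) = coset e 0"
  unfolding coset_def by (auto simp flip: scaleR_add_left) (metis add.commute diff_add_cancel)

lemma lip_norm_seminorm: "lip_norm e L \<Longrightarrow> is_seminorm L"
  unfolding lip_norm_def by blast

lemma lip_norm_eq_0_iff: "lip_norm e L \<Longrightarrow> L a = 0 \<longleftrightarrow> (\<exists>t. a = t *\<^sub>R e)"
  unfolding lip_norm_def by blast

lemma lip_norm_ball_closed:
  "lip_norm e L \<Longrightarrow> (\<And>n. L (x n) \<le> 1) \<Longrightarrow> (\<lambda>n. ou_norm e (x n - a)) \<longlonglongrightarrow> 0 \<Longrightarrow> L a \<le> 1"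
  unfolding lip_norm_def by blast

lemma lip_norm_ball_totally_bounded:
  assumes "lip_norm e L" "\<epsilon> > 0"
  obtains F where "finite F" "F \<subseteq> {a. L a \<le> 1}" "\<And>a. L a \<le> 1 \<Longrightarrow> \<exists>b\<in>F. q_norm e (a - b) < \<epsilon>"
  using assms unfolding lip_norm_def by metis

lemma closed_lip_norm_lip_norm: "closed_lip_norm e L \<Longrightarrow> lip_norm e L"
  unfolding closed_lip_norm_def by blast

lemma closed_lip_norm_ball_complete:
  assumes "closed_lip_norm e L" "\<And>n. L (x n) \<le> 1"
    and "\<And>\<epsilon>. \<epsilon> > 0 \<Longrightarrow> \<exists>N. \<forall>m\<ge>N. \<forall>n\<ge>N. ou_norm e (x m - x n) < \<epsilon>"
  obtains a where "L a \<le> 1" "(\<lambda>n. ou_norm e (x n - a)) \<longlonglongrightarrow> 0"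
  using assms unfolding closed_lip_norm_def by metis

lemma Af0_affine:
  assumes "f \<in> Af0 e L" "L a \<le> 1" "L b \<le> 1" "0 \<le> s" "s \<le> 1"
  shows "f (coset e (s *\<^sub>R a + (1 - s) *\<^sub>R b)) = s * f (coset e a) + (1 - s) * f (coset e b)"
  using assms unfolding Af0_def by blast

lemma Af0_zero: "f \<in> Af0 e L \<Longrightarrow> f (coset e 0) = 0"
  unfolding Af0_def by blast

lemma Af0_uminus:
  assumes "is_seminorm L" "f \<in> Af0 e L" "L a \<le> 1"
  shows "f (coset e (- a)) = - f (coset e a)"
proof -
  have "L (- a) \<le> 1" using assms is_seminorm_uminus by metis
  from Af0_affine[OF assms(2,3) this, of "1 / 2"] Af0_zero[OF assms(2)] show ?thesis by simp
qed

lemma Af0_continuous_at_zero: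
  assumes "f \<in> Af0 e L" "is_seminorm L" "\<epsilon> > 0"
  obtains \<delta> where "\<delta> > 0" "\<And>b. L b \<le> 1 \<Longrightarrow> q_norm e b < \<delta> \<Longrightarrow> \<bar>f (coset e b)\<bar> < \<epsilon>"
proof -
  have "L 0 \<le> 1" using is_seminorm_zero[OF assms(2)] by simp
  with assms(1,3) have "\<exists>\<delta>>0. \<forall>b. L b \<le> 1 \<and> q_norm e (b - 0) < \<delta> \<longrightarrow>
      \<bar>f (coset e b) - f (coset e 0)\<bar> < \<epsilon>"
    unfolding Af0_def by blast
  with that Af0_zero[OF assms(1)] show ?thesis by auto
qed

lemma convex_on_Af0:
  assumes "is_seminorm L" "f \<in> Af0 e L"
  shows "convex_on {a. L a \<le> 1} (\<lambda>a. f (coset e a))"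
  unfolding convex_on_def
proof (intro conjI ballI allI impI)
  show "convex {a. L a \<le> 1}" using convex_seminorm_ball[OF assms(1)] .
  fix x y and u v :: real assume "x \<in> {a. L a \<le> 1}" "y \<in> {a. L a \<le> 1}" "0 \<le> u" "0 \<le> v" "u + v = 1"
  then have "f (coset e (u *\<^sub>R x + (1 - u) *\<^sub>R y)) = u * f (coset e x) + (1 - u) * f (coset e y)"
    by (intro Af0_affine[OF assms(2)]) auto
  moreover have "v = 1 - u" using \<open>u + v = 1\<close> by simp
  ultimately show "f (coset e (u *\<^sub>R x + v *\<^sub>R y)) \<le> u * f (coset e x) + v * f (coset e y)"
    by simp
qed

section \<open>The order-unit norm and the quotient norm\<close>

definition ou_bounds :: "'a::ordered_real_vector \<Rightarrow> 'a \<Rightarrow> real set" where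
  "ou_bounds e a = {r. 0 \<le> r \<and> - (r *\<^sub>R e) \<le> a \<and> a \<le> r *\<^sub>R e}"

lemma ou_norm_eq_Inf_ou_bounds: "ou_norm e a = Inf (ou_bounds e a)"
  unfolding ou_norm_def ou_bounds_def ..

lemma bdd_below_ou_bounds: "bdd_below (ou_bounds e a)"
  unfolding ou_bounds_def by (auto intro: bdd_belowI[where m=0])

lemma ou_bounds_uminus: "ou_bounds e (- a) = ou_bounds e a"
  unfolding ou_bounds_def by (auto simp: minus_le_iff)

lemma add_mem_ou_bounds:
  assumes "r \<in> ou_bounds e a" "s \<in> ou_bounds e b"
  shows "r + s \<in> ou_bounds e (a + b)"
proof -
  have "- (r *\<^sub>R e) \<le> a" "a \<le> r *\<^sub>R e" "- (s *\<^sub>R e) \<le> b" "b \<le> s *\<^sub>R e"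
    using assms unfolding ou_bounds_def by auto
  then have "- (r *\<^sub>R e) + - (s *\<^sub>R e) \<le> a + b" "a + b \<le> r *\<^sub>R e + s *\<^sub>R e"
    by (metis add_mono)+
  with assms show ?thesis unfolding ou_bounds_def by (simp add: scaleR_add_left)
qed

lemma mult_mem_ou_bounds:
  assumes "c \<ge> 0" "r \<in> ou_bounds e a"
  shows "c * r \<in> ou_bounds e (c *\<^sub>R a)"
proof -
  have "- (r *\<^sub>R e) \<le> a" "a \<le> r *\<^sub>R e"
    using assms(2) unfolding ou_bounds_def by auto
  then have "c *\<^sub>R (- (r *\<^sub>R e)) \<le> c *\<^sub>R a" "c *\<^sub>R a \<le> c *\<^sub>R (r *\<^sub>R e)"
    using scaleR_left_mono assms(1) by blast+
  then have "- ((c * r) *\<^sub>R e) \<le> c *\<^sub>R a" "c *\<^sub>R a \<le> (c * r) *\<^sub>R e"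
    by simp_all
  with assms show ?thesis unfolding ou_bounds_def by simp
qed

lemma q_norm_eq_INF: "q_norm e a = (INF t. ou_norm e (a + t *\<^sub>R e))"
  unfolding q_norm_def by (simp add: full_SetCompr_eq)

locale order_unit_space =
  fixes e :: "'a::ordered_real_vector"
  assumes order_unit: "order_unit e" and unit_nonneg: "0 \<le> e"
begin

lemma ou_bounds_nonempty: "ou_bounds e a \<noteq> {}"
proof -
  obtain r s where "a \<le> r *\<^sub>R e" "- a \<le> s *\<^sub>R e"
    using order_unit unfolding order_unit_def by blast
  moreover have "r *\<^sub>R e \<le> max (max r s) 0 *\<^sub>R e" "s *\<^sub>R e \<le> max (max r s) 0 *\<^sub>R e"
    using unit_nonneg by (auto intro: scaleR_right_mono)
  ultimately have "max (max r s) 0 \<in> ou_bounds e a"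
    unfolding ou_bounds_def by (auto simp: minus_le_iff intro: order_trans)
  then show ?thesis by blast
qed

lemma ou_norm_le: "r \<in> ou_bounds e a \<Longrightarrow> ou_norm e a \<le> r"
  unfolding ou_norm_eq_Inf_ou_bounds by (rule cInf_lower[OF _ bdd_below_ou_bounds])

lemma ou_norm_nonneg: "0 \<le> ou_norm e a"
  unfolding ou_norm_eq_Inf_ou_bounds using ou_bounds_nonempty
  by (rule cInf_greatest) (simp add: ou_bounds_def)

lemma ou_norm_zero: "ou_norm e 0 = 0"
  using ou_norm_le[of 0 0] ou_norm_nonneg[of 0] by (simp add: ou_bounds_def)

lemma ou_norm_triangle: "ou_norm e (a + b) \<le> ou_norm e a + ou_norm e b"
proof -
  have "(INF r\<in>ou_bounds e (a + b). r) \<le> (INF r\<in>ou_bounds e a. r) + (INF s\<in>ou_bounds e b. s)"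
  proof (rule cINF_le_add_cINF[OF ou_bounds_nonempty ou_bounds_nonempty])
    show "bdd_below ((\<lambda>r. r) ` ou_bounds e (a + b))" using bdd_below_ou_bounds by simp
    fix r s assume "r \<in> ou_bounds e a" "s \<in> ou_bounds e b"
    then show "\<exists>u\<in>ou_bounds e (a + b). u \<le> r + s" using add_mem_ou_bounds by blast
  qed
  then show ?thesis unfolding ou_norm_eq_Inf_ou_bounds by simp
qed

lemma ou_norm_uminus: "ou_norm e (- a) = ou_norm e a"
  unfolding ou_norm_eq_Inf_ou_bounds ou_bounds_uminus ..

lemma ou_norm_scaleR_pos:
  assumes "c > 0"
  shows "ou_norm e (c *\<^sub>R a) = c * ou_norm e a"
proof -
  have "(INF r\<in>ou_bounds e (c *\<^sub>R a). r) = c * (INF r\<in>ou_bounds e a. r)"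
  proof (rule cINF_eq_mult_cINF[OF assms ou_bounds_nonempty])
    fix r assume "r \<in> ou_bounds e (c *\<^sub>R a)"
    then have "(1 / c) * r \<in> ou_bounds e a"
      using mult_mem_ou_bounds[of "1 / c" r e "c *\<^sub>R a"] assms by simp
    then show "\<exists>s\<in>ou_bounds e a. c * s \<le> r" using assms by force
  next
    fix r assume "r \<in> ou_bounds e a"
    with assms have "c * r \<in> ou_bounds e (c *\<^sub>R a)" by (simp add: mult_mem_ou_bounds)
    then show "\<exists>s\<in>ou_bounds e (c *\<^sub>R a). s \<le> c * r" by blast
  qed (use bdd_below_ou_bounds in auto)
  then show ?thesis unfolding ou_norm_eq_Inf_ou_bounds by simp
qed

lemma bdd_below_ou_norm_coset: "bdd_below (range (\<lambda>t. ou_norm e (a + t *\<^sub>R e)))"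
  using ou_norm_nonneg by (auto intro: bdd_belowI2[where m=0])

lemma q_norm_le_ou_norm_add: "q_norm e a \<le> ou_norm e (a + t *\<^sub>R e)"
  unfolding q_norm_eq_INF by (rule cINF_lower[OF bdd_below_ou_norm_coset]) simp

lemma q_norm_le_ou_norm: "q_norm e a \<le> ou_norm e a"
  using q_norm_le_ou_norm_add[of a 0] by simp

lemma q_norm_nonneg: "0 \<le> q_norm e a"
  unfolding q_norm_eq_INF using ou_norm_nonneg by (intro cINF_greatest) auto

lemma q_norm_unit: "q_norm e e = 0"
  using q_norm_le_ou_norm_add[of e "- 1"] q_norm_nonneg[of e] ou_norm_zero by simp

lemma q_norm_uminus: "q_norm e (- a) = q_norm e a"
proof -
  have "q_norm e (- b) \<le> q_norm e b" for b
    unfolding q_norm_eq_INF[of e b]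
    using q_norm_le_ou_norm_add[of "- b" "- _"] ou_norm_uminus[of "b + _ *\<^sub>R e"]
    by (intro cINF_greatest) auto
  from this[of a] this[of "- a"] show ?thesis by simp
qed

lemma sublinear_q_norm: "sublinear (q_norm e)"
  unfolding sublinear_def q_norm_eq_INF
proof safe
  fix a b
  show "(INF t. ou_norm e (a + b + t *\<^sub>R e)) \<le> (INF t. ou_norm e (a + t *\<^sub>R e)) + (INF t. ou_norm e (b + t *\<^sub>R e))"
  proof (rule cINF_le_add_cINF[OF _ _ bdd_below_ou_norm_coset])
    fix s t :: real
    show "\<exists>u\<in>UNIV. ou_norm e (a + b + u *\<^sub>R e) \<le> ou_norm e (a + s *\<^sub>R e) + ou_norm e (b + t *\<^sub>R e)"
      using ou_norm_triangle[of "a + s *\<^sub>R e" "b + t *\<^sub>R e"]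
      by (intro bexI[of _ "s + t"]) (simp_all add: algebra_simps)
  qed simp_all
next
  fix c :: real and a assume "c > 0"
  have scale: "ou_norm e (c *\<^sub>R a + (c * t) *\<^sub>R e) = c * ou_norm e (a + t *\<^sub>R e)" for t
    using ou_norm_scaleR_pos[OF \<open>c > 0\<close>, of "a + t *\<^sub>R e"] by (simp add: scaleR_add_right)
  show "(INF t. ou_norm e (c *\<^sub>R a + t *\<^sub>R e)) = c * (INF t. ou_norm e (a + t *\<^sub>R e))"
  proof (rule cINF_eq_mult_cINF[OF \<open>c > 0\<close> _ bdd_below_ou_norm_coset bdd_below_ou_norm_coset])
    fix t
    show "\<exists>u\<in>UNIV. ou_norm e (c *\<^sub>R a + u *\<^sub>R e) \<le> c * ou_norm e (a + t *\<^sub>R e)"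
      using scale[of t] by (intro bexI[of _ "c * t"]) simp_all
    show "\<exists>u\<in>UNIV. c * ou_norm e (a + u *\<^sub>R e) \<le> ou_norm e (c *\<^sub>R a + t *\<^sub>R e)"
      using scale[of "t / c"] \<open>c > 0\<close> by (intro bexI[of _ "t / c"]) simp_all
  qed simp
qed

lemma dual_space_le_q_norm:
  assumes "l \<in> dual_space e" "l e = 0"
  obtains D where "D > 0" "\<And>a. \<bar>l a\<bar> \<le> D * q_norm e a"
proof -
  obtain C where C: "\<And>a. \<bar>l a\<bar> \<le> C * ou_norm e a" and "linear l"
    using assms(1) unfolding dual_space_def by blast
  define D where "D = \<bar>C\<bar> + 1"
  have "D > 0" unfolding D_def by simp
  have "\<bar>l a\<bar> / D \<le> ou_norm e (a + t *\<^sub>R e)" for a t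
  proof -
    have "\<bar>l a\<bar> = \<bar>l (a + t *\<^sub>R e)\<bar>"
      using \<open>linear l\<close> assms(2) by (simp add: linear_add linear_scale)
    also have "\<dots> \<le> C * ou_norm e (a + t *\<^sub>R e)" by (rule C)
    also have "\<dots> \<le> D * ou_norm e (a + t *\<^sub>R e)"
      unfolding D_def by (intro mult_right_mono ou_norm_nonneg) simp
    finally show ?thesis using \<open>D > 0\<close> by (simp add: field_simps)
  qed
  then have "\<bar>l a\<bar> / D \<le> q_norm e a" for a
    unfolding q_norm_eq_INF by (intro cINF_greatest) auto
  with \<open>D > 0\<close> show ?thesis by (intro that[of D]) (simp_all add: field_simps)
qed

lemma dual_fun_mem_Af0:
  assumes "l \<in> dual_space e" "l e = 0"
  shows "dual_fun l \<in> Af0 e L"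
proof -
  have "linear l" using assms(1) unfolding dual_space_def by blast
  then have dual_fun_eq: "dual_fun l (coset e a) = l a" for a
    using dual_fun_coset assms(2) by blast
  obtain D where "D > 0" and D: "\<And>a. \<bar>l a\<bar> \<le> D * q_norm e a"
    using dual_space_le_q_norm[OF assms] by blast
  have "\<exists>\<delta>>0. \<forall>b. q_norm e (b - a) < \<delta> \<longrightarrow> \<bar>l b - l a\<bar> < \<epsilon>" if "\<epsilon> > 0" for a \<epsilon>
  proof (intro exI[of _ "\<epsilon> / D"] conjI allI impI)
    fix b assume "q_norm e (b - a) < \<epsilon> / D"
    moreover have "\<bar>l b - l a\<bar> \<le> D * q_norm e (b - a)"
      using D[of "b - a"] \<open>linear l\<close> by (simp add: linear_diff)
    ultimately show "\<bar>l b - l a\<bar> < \<epsilon>" using \<open>D > 0\<close> by (simp add: field_simps)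
  qed (use that \<open>D > 0\<close> in simp)
  with \<open>linear l\<close> show ?thesis
    unfolding Af0_def by (simp add: dual_fun_eq linear_add linear_scale linear_0) blast
qed

text \<open>With \<open>b\<close> from a finite \<open>\<delta>\<close>-net of the Lip-ball, \<open>f a = 2 f ((a - b) / 2) + f b\<close> and
  \<open>(a - b) / 2\<close> lies in the Lip-ball within \<open>\<delta>\<close> of \<open>0\<close>.\<close>

lemma Af0_bounded:
  assumes "lip_norm e L" "f \<in> Af0 e L"
  obtains C where "\<And>a. L a \<le> 1 \<Longrightarrow> \<bar>f (coset e a)\<bar> \<le> C"
proof -
  have L: "is_seminorm L" using lip_norm_seminorm[OF assms(1)] .
  obtain \<delta> where "\<delta> > 0" and \<delta>: "\<And>b. L b \<le> 1 \<Longrightarrow> q_norm e b < \<delta> \<Longrightarrow> \<bar>f (coset e b)\<bar> < 1"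
    using Af0_continuous_at_zero[OF assms(2) L zero_less_one] by blast
  then obtain F where "finite F" "F \<subseteq> {a. L a \<le> 1}"
    and net: "\<And>a. L a \<le> 1 \<Longrightarrow> \<exists>b\<in>F. q_norm e (a - b) < \<delta>"
    using lip_norm_ball_totally_bounded[OF assms(1)] by blast
  have "\<bar>f (coset e a)\<bar> \<le> 2 + (\<Sum>b\<in>F. \<bar>f (coset e b)\<bar>)" if a: "L a \<le> 1" for a
  proof -
    obtain b where "b \<in> F" "q_norm e (a - b) < \<delta>" using net[OF a] by blast
    with \<open>F \<subseteq> _\<close> have "L b \<le> 1" "L (- b) \<le> 1" using is_seminorm_uminus[OF L] by auto
    define z where "z = (1 / 2) *\<^sub>R a + (1 - 1 / 2) *\<^sub>R (- b)"
    have "L z \<le> 1"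
      using convexD[OF convex_seminorm_ball[OF L], of a "- b" "1 / 2" "1 - 1 / 2"] a \<open>L (- b) \<le> 1\<close>
      unfolding z_def by simp
    moreover have "q_norm e z < \<delta>"
      using \<open>q_norm e (a - b) < \<delta>\<close> sublinear_scaleR[OF sublinear_q_norm, of "1 / 2" "a - b"]
        q_norm_nonneg[of "a - b"]
      unfolding z_def by (simp add: scaleR_diff_right)
    ultimately have "\<bar>f (coset e z)\<bar> < 1" by (rule \<delta>)
    moreover have "f (coset e z) = f (coset e a) / 2 - f (coset e b) / 2"
      using Af0_affine[OF assms(2) a \<open>L (- b) \<le> 1\<close>, of "1 / 2"] Af0_uminus[OF L assms(2) \<open>L b \<le> 1\<close>]
      unfolding z_def by simp
    moreover have "\<bar>f (coset e b)\<bar> \<le> (\<Sum>b\<in>F. \<bar>f (coset e b)\<bar>)"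
      using \<open>b \<in> F\<close> \<open>finite F\<close> by (intro member_le_sum) auto
    ultimately show ?thesis by linarith
  qed
  then show ?thesis by (rule that)
qed

lemma Af0_le_linear_growth:
  assumes "lip_norm e L" "f \<in> Af0 e L" "\<epsilon> > 0"
  obtains M where "M \<ge> 0" "\<And>a. L a \<le> 1 \<Longrightarrow> \<bar>f (coset e a)\<bar> \<le> \<epsilon> + M * q_norm e a"
proof -
  have L: "is_seminorm L" using lip_norm_seminorm[OF assms(1)] .
  obtain C where C: "\<And>a. L a \<le> 1 \<Longrightarrow> \<bar>f (coset e a)\<bar> \<le> C"
    using Af0_bounded[OF assms(1,2)] by blast
  have "L 0 \<le> 1" using is_seminorm_zero[OF L] by simp
  then have "C \<ge> 0" using C[of 0] by simp
  obtain \<delta> where "\<delta> > 0" and \<delta>: "\<And>b. L b \<le> 1 \<Longrightarrow> q_norm e b < \<delta> \<Longrightarrow> \<bar>f (coset e b)\<bar> < \<epsilon>"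
    using Af0_continuous_at_zero[OF assms(2) L assms(3)] by blast
  have "\<bar>f (coset e a)\<bar> \<le> \<epsilon> + C / \<delta> * q_norm e a" if "L a \<le> 1" for a
  proof (cases "q_norm e a < \<delta>")
    case True
    have "0 \<le> C / \<delta> * q_norm e a" using q_norm_nonneg[of a] \<open>C \<ge> 0\<close> \<open>\<delta> > 0\<close> by simp
    with \<delta>[OF that True] show ?thesis by linarith
  next
    case False
    then have "C \<le> C / \<delta> * q_norm e a"
      using \<open>C \<ge> 0\<close> \<open>\<delta> > 0\<close> by (simp add: field_simps mult_left_mono)
    then show ?thesis using C[OF that] \<open>\<epsilon> > 0\<close> by linarith
  qed
  with \<open>C \<ge> 0\<close> \<open>\<delta> > 0\<close> show ?thesis by (intro that[of "C / \<delta>"]) simp_all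
qed

lemma linear_le_q_norm_mem_dual_space:
  assumes "linear l" "\<And>a. l a \<le> M * q_norm e a"
  shows "l \<in> dual_space e" "l e = 0"
proof -
  have "\<bar>l a\<bar> \<le> M * q_norm e a" for a
    using assms(2)[of a] assms(2)[of "- a"] q_norm_uminus[of a] linear_neg[OF assms(1), of a] by simp
  moreover have "M * q_norm e a \<le> \<bar>M\<bar> * ou_norm e a" for a
    by (rule mult_mono[OF abs_ge_self q_norm_le_ou_norm abs_ge_zero q_norm_nonneg])
  ultimately have "\<bar>l a\<bar> \<le> \<bar>M\<bar> * ou_norm e a" for a
    by (meson order_trans)
  with assms(1) show "l \<in> dual_space e" unfolding dual_space_def by blast
  show "l e = 0" using \<open>\<bar>l e\<bar> \<le> M * q_norm e e\<close> q_norm_unit by simp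
qed

text \<open>The linear \<open>l\<close> with \<open>l \<le> f + \<epsilon>/2\<close> on the Lip-ball, evaluated at \<open>a\<close> and \<open>-a\<close>, is
  within \<open>\<epsilon>/2\<close> of \<open>f\<close> there because \<open>f\<close> is odd.\<close>

lemma Af0_approximation:
  assumes "lip_norm e L" "f \<in> Af0 e L" "\<epsilon> > 0"
  shows "\<exists>l\<in>dual_space e. l e = 0 \<and> (\<forall>X\<in>lipK e L. \<bar>f X - dual_fun l X\<bar> < \<epsilon>)"
proof -
  define B where "B = {a. L a \<le> 1}"
  define \<eta> where "\<eta> = \<epsilon> / 2"
  define h where "h a = f (coset e a) + \<eta>" for a
  have L: "is_seminorm L" using lip_norm_seminorm[OF assms(1)] .
  obtain M where "M \<ge> 0" and growth: "\<And>a. a \<in> B \<Longrightarrow> \<bar>f (coset e a)\<bar> \<le> \<eta> + M * q_norm e a"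
    using Af0_le_linear_growth[OF assms(1,2), of \<eta>] assms(3) unfolding B_def \<eta>_def by auto
  have "convex_on B h"
    unfolding B_def h_def by (intro convex_on_add convex_on_Af0[OF L assms(2)]) (simp add: convex_on_const convex_seminorm_ball[OF L])
  moreover have "B \<noteq> {}"
    using is_seminorm_zero[OF L] unfolding B_def by (metis empty_Collect_eq zero_le_one)
  moreover have "- (M * q_norm e (- a)) \<le> h a" if "a \<in> B" for a
    using growth[OF that] q_norm_uminus[of a] unfolding h_def by simp
  ultimately have "\<exists>l. linear l \<and> l \<le> (\<lambda>a. M * q_norm e a) \<and> (\<forall>a\<in>B. l a \<le> h a)"
    by (intro linear_le_sublinear_and_convex_exists sublinear_cmult sublinear_q_norm \<open>M \<ge> 0\<close>)
  then obtain l where "linear l" and l_le: "\<And>a. l a \<le> M * q_norm e a"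
    and l_le_h: "\<And>a. a \<in> B \<Longrightarrow> l a \<le> h a"
    unfolding le_fun_def by blast
  note l_dual = linear_le_q_norm_mem_dual_space[OF \<open>linear l\<close> l_le]
  have "\<bar>f (coset e a) - dual_fun l (coset e a)\<bar> < \<epsilon>" if "a \<in> B" for a
  proof -
    have "- a \<in> B" using that is_seminorm_uminus[OF L] unfolding B_def by simp
    then have "- l a \<le> - f (coset e a) + \<eta>"
      using l_le_h[of "- a"] Af0_uminus[OF L assms(2)] that linear_neg[OF \<open>linear l\<close>]
      unfolding h_def B_def by simp
    with l_le_h[OF that] assms(3) dual_fun_coset[OF \<open>linear l\<close> l_dual(2)] show ?thesis
      unfolding h_def \<eta>_def by simp
  qed
  with l_dual show ?thesis unfolding lipK_def B_def by blast
qed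

end

section \<open>Order units that are not positive\<close>

lemma ou_bounds_if_not_nonneg:
  assumes "\<not> 0 \<le> e" "r \<in> ou_bounds e a"
  shows "r = 0 \<and> a = 0"
proof -
  have a: "0 \<le> r" "- (r *\<^sub>R e) \<le> a" "a \<le> r *\<^sub>R e" using assms(2) unfolding ou_bounds_def by auto
  have "r = 0"
  proof (rule ccontr)
    assume "r \<noteq> 0"
    have "0 \<le> (2 * r) *\<^sub>R e"
      using add_right_mono[OF order_trans[OF a(2,3)], of "r *\<^sub>R e"] by (simp add: scaleR_add_left[symmetric])
    then have "(1 / (2 * r)) *\<^sub>R 0 \<le> (1 / (2 * r)) *\<^sub>R ((2 * r) *\<^sub>R e)"
      using a(1) by (intro scaleR_left_mono) auto
    with \<open>r \<noteq> 0\<close> assms(1) show False by simp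
  qed
  with a show ?thesis by (simp add: antisym)
qed

lemma ou_norm_if_not_nonneg:
  assumes "\<not> 0 \<le> e"
  shows "ou_norm e a = (if a = 0 then 0 else Inf {})"
proof -
  have "ou_bounds e a \<subseteq> {0}" "a \<noteq> 0 \<Longrightarrow> ou_bounds e a = {}"
    using ou_bounds_if_not_nonneg[OF assms] by blast+
  moreover have "0 \<in> ou_bounds e 0" by (simp add: ou_bounds_def)
  ultimately have "ou_bounds e a = (if a = 0 then {0} else {})" by auto
  then show ?thesis unfolding ou_norm_eq_Inf_ou_bounds by simp
qed

lemma q_norm_if_not_nonneg:
  assumes "\<not> 0 \<le> e" "\<nexists>t. a = t *\<^sub>R e"
  shows "q_norm e a = Inf {}"
proof -
  have "a + t *\<^sub>R e \<noteq> 0" for t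
  proof
    assume "a + t *\<^sub>R e = 0"
    then have "a = (- t) *\<^sub>R e" by (simp add: add_eq_0_iff)
    with assms(2) show False by blast
  qed
  then show ?thesis unfolding q_norm_eq_INF ou_norm_if_not_nonneg[OF assms(1)] by simp
qed

lemma lip_norm_unit_span_if_ou_norm_zero:
  assumes "lip_norm e L" "\<And>a. ou_norm e a = 0"
  shows "\<exists>t. a = t *\<^sub>R e"
proof -
  have L: "is_seminorm L" using lip_norm_seminorm[OF assms(1)] .
  have ball: "L x \<le> 1" for x
    using lip_norm_ball_closed[OF assms(1), of "\<lambda>n. 0" x] assms(2) is_seminorm_zero[OF L] by simp
  have "L a = 0"
  proof (rule ccontr)
    assume "L a \<noteq> 0"
    with is_seminorm_nonneg[OF L, of a] have "L a > 0" by simp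
    then have "L ((2 / L a) *\<^sub>R a) = 2" using L unfolding is_seminorm_def by simp
    with ball show False by (metis numeral_le_one_iff semiring_norm(69))
  qed
  with lip_norm_eq_0_iff[OF assms(1)] show ?thesis by blast
qed

lemma closed_lip_norm_trivial_if_ou_norm_neg:
  fixes e a :: "'a::ordered_real_vector"
  assumes "closed_lip_norm e L" "ou_norm e 0 = 0" "\<And>a. a \<noteq> 0 \<Longrightarrow> ou_norm e a = c" "c < 0"
  shows "a = 0"
proof -
  have L: "is_seminorm L" using lip_norm_seminorm[OF closed_lip_norm_lip_norm[OF assms(1)]] .
  define v where "v = (1 / (L a + 1)) *\<^sub>R a"
  have "L v \<le> 1" unfolding v_def by (rule is_seminorm_scaled_into_ball[OF L])
  define x where "x n = (if even n then 0 else v)" for n :: nat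
  have "L (x n) \<le> 1" for n using \<open>L v \<le> 1\<close> is_seminorm_zero[OF L] unfolding x_def by simp
  moreover have "ou_norm e y \<le> 0" for y using assms(2-4) by (cases "y = 0") auto
  then have "\<exists>N. \<forall>m\<ge>N. \<forall>n\<ge>N. ou_norm e (x m - x n) < \<epsilon>" if "\<epsilon> > 0" for \<epsilon>
    using that by (meson le_less_trans)
  ultimately obtain b where "(\<lambda>n. ou_norm e (x n - b)) \<longlonglongrightarrow> 0"
    using closed_lip_norm_ball_complete[OF assms(1)] by blast
  then obtain N where N: "\<And>n. n \<ge> N \<Longrightarrow> \<bar>ou_norm e (x n - b)\<bar> < - c"
    using LIMSEQ_D[of _ 0 "- c"] assms(4) by fastforce
  have "x n = b" if "n \<ge> N" for n
    using N[OF that] assms(3)[of "x n - b"] by force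
  from this[of "2 * N"] this[of "2 * N + 1"] have "v = 0" unfolding x_def by simp
  then show ?thesis using is_seminorm_nonneg[OF L, of a] unfolding v_def by simp
qed

lemma lip_norm_unit_span_if_q_norm_pos:
  assumes "lip_norm e L" "\<And>a. \<nexists>t. a = t *\<^sub>R e \<Longrightarrow> q_norm e a = c" "c > 0"
  shows "\<exists>t. a = t *\<^sub>R e"
proof (rule ccontr)
  assume a: "\<nexists>t. a = t *\<^sub>R e"
  have L: "is_seminorm L" using lip_norm_seminorm[OF assms(1)] .
  define v where "v = (1 / (L a + 1)) *\<^sub>R a"
  have ball: "L (s *\<^sub>R v) \<le> 1" if "s \<in> {0..1}" for s
  proof -
    have "L (s *\<^sub>R v) = s * L v" using L that unfolding is_seminorm_def by simp
    also have "\<dots> \<le> 1"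
      using that is_seminorm_scaled_into_ball[OF L, of a] is_seminorm_nonneg[OF L, of v]
      unfolding v_def by (intro mult_le_one) auto
    finally show ?thesis .
  qed
  obtain F where "finite F" "F \<subseteq> {a. L a \<le> 1}"
    and net: "\<And>a. L a \<le> 1 \<Longrightarrow> \<exists>b\<in>F. q_norm e (a - b) < c"
    using lip_norm_ball_totally_bounded[OF assms(1,3)] by metis
  have "finite {0..1::real}"
  proof (rule finite_if_witnesses_in_finite[OF \<open>finite F\<close>, where R = "\<lambda>s b. \<exists>t. s *\<^sub>R v - b = t *\<^sub>R e"])
    fix s :: real assume "s \<in> {0..1}"
    then obtain b where "b \<in> F" "q_norm e (s *\<^sub>R v - b) < c" using net ball by blast
    with assms(2)[of "s *\<^sub>R v - b"] show "\<exists>b\<in>F. \<exists>t. s *\<^sub>R v - b = t *\<^sub>R e" by auto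
  next
    fix s s' :: real and b
    assume "\<exists>t. s *\<^sub>R v - b = t *\<^sub>R e" "\<exists>t. s' *\<^sub>R v - b = t *\<^sub>R e"
    then obtain t t' where "s *\<^sub>R v - b = t *\<^sub>R e" "s' *\<^sub>R v - b = t' *\<^sub>R e" by blast
    then have "(s - s') *\<^sub>R v = (t - t') *\<^sub>R e" by (simp add: algebra_simps)
    moreover have "(s - s') *\<^sub>R a = (L a + 1) *\<^sub>R ((s - s') *\<^sub>R v)"
      using is_seminorm_nonneg[OF L, of a] unfolding v_def by simp
    ultimately have "(1 / (s - s')) *\<^sub>R ((s - s') *\<^sub>R a) = (1 / (s - s')) *\<^sub>R (((L a + 1) * (t - t')) *\<^sub>R e)"
      by simp
    then have "s \<noteq> s' \<Longrightarrow> a = ((L a + 1) * (t - t') / (s - s')) *\<^sub>R e" by simp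
    with a show "s = s'" by blast
  qed
  then show False using infinite_Icc[of "0::real" 1] by simp
qed

text \<open>Without \<open>0 \<le> e\<close> the order-unit norm vanishes at \<open>0\<close> and takes the unspecified value
  \<open>Inf {}\<close> everywhere else; whatever the sign of that value, one of the axioms of a closed
  Lip-norm forces \<open>\<A> = \<real> e\<close>.\<close>

lemma closed_lip_norm_unit_span_if_not_nonneg:
  assumes "closed_lip_norm e L" "\<not> 0 \<le> e"
  shows "\<exists>t. a = t *\<^sub>R e"
proof -
  have lip: "lip_norm e L" using closed_lip_norm_lip_norm[OF assms(1)] .
  consider "Inf {} = (0::real)" | "Inf {} < (0::real)" | "Inf {} > (0::real)" by linarith
  then show ?thesis
  proof cases
    case 1
    then show ?thesis
      using lip_norm_unit_span_if_ou_norm_zero[OF lip] ou_norm_if_not_nonneg[OF assms(2)] by simp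
  next
    case 2
    then have "a = 0"
      using closed_lip_norm_trivial_if_ou_norm_neg[OF assms(1)] ou_norm_if_not_nonneg[OF assms(2)] by simp
    then show ?thesis by (intro exI[of _ 0]) simp
  next
    case 3
    then show ?thesis
      using lip_norm_unit_span_if_q_norm_pos[OF lip] q_norm_if_not_nonneg[OF assms(2)] by blast
  qed
qed

lemma dual_fun_Af0_if_unit_span:
  assumes span: "\<And>a. \<exists>t. a = t *\<^sub>R e"
  shows "(\<forall>l\<in>dual_space e. l e = 0 \<longrightarrow> dual_fun l \<in> Af0 e L) \<and>
         (\<forall>f\<in>Af0 e L. \<forall>\<epsilon>>0. \<exists>l\<in>dual_space e. l e = 0 \<and>
            (\<forall>X\<in>lipK e L. \<bar>f X - dual_fun l X\<bar> < \<epsilon>))"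
proof -
  have dual_fun_zero: "dual_fun l X = 0" if "l \<in> dual_space e" "l e = 0" for l X
  proof -
    obtain t where "(SOME a. a \<in> X) = t *\<^sub>R e" using span by blast
    with that show ?thesis unfolding dual_fun_def dual_space_def by (simp add: linear_scale)
  qed
  have Af0_zero_on_lipK: "f X = 0" if "f \<in> Af0 e L" "X \<in> lipK e L" for f X
  proof -
    obtain a t where "X = coset e a" "a = t *\<^sub>R e" using \<open>X \<in> lipK e L\<close> span unfolding lipK_def by blast
    with Af0_zero[OF \<open>f \<in> Af0 e L\<close>] show ?thesis by (simp add: coset_scaleR_unit)
  qed
  have zero_Af0: "(\<lambda>X. 0) \<in> Af0 e L" unfolding Af0_def by simp
  have zero_dual: "(\<lambda>a. 0) \<in> dual_space e" unfolding dual_space_def by (auto intro!: exI[of _ 0] linearI)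
  show ?thesis
  proof (intro conjI ballI allI impI)
    fix l assume "l \<in> dual_space e" "l e = 0"
    then have "dual_fun l = (\<lambda>X. 0)" using dual_fun_zero by blast
    then show "dual_fun l \<in> Af0 e L" using zero_Af0 by simp
  next
    fix f and \<epsilon> :: real assume "f \<in> Af0 e L" "\<epsilon> > 0"
    then show "\<exists>l\<in>dual_space e. l e = 0 \<and> (\<forall>X\<in>lipK e L. \<bar>f X - dual_fun l X\<bar> < \<epsilon>)"
      using zero_dual dual_fun_zero[OF zero_dual] Af0_zero_on_lipK[OF \<open>f \<in> Af0 e L\<close>]
      by (intro bexI[of _ "\<lambda>a. 0"]) auto
  qed
qed

theorem proposition5p3:
  fixes e :: "'a::ordered_real_vector" and L :: "'a \<Rightarrow> real"
  assumes "order_unit e" and "closed_lip_norm e L"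
  shows "(\<forall>l\<in>dual_space e. l e = 0 \<longrightarrow> dual_fun l \<in> Af0 e L) \<and>
         (\<forall>f\<in>Af0 e L. \<forall>\<epsilon>>0. \<exists>l\<in>dual_space e. l e = 0 \<and>
            (\<forall>X\<in>lipK e L. \<bar>f X - dual_fun l X\<bar> < \<epsilon>))"
proof (cases "0 \<le> e")
  case True
  then interpret order_unit_space e using assms(1) by unfold_locales
  show ?thesis
    using dual_fun_mem_Af0 Af0_approximation[OF closed_lip_norm_lip_norm[OF assms(2)]] by blast
next
  case False
  then show ?thesis
    using dual_fun_Af0_if_unit_span closed_lip_norm_unit_span_if_not_nonneg[OF assms(2)] by blast
qed

end
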